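(* Let $K$ be a field of characteristic zero, $W_n$ the Witt Lie algebra and $\sigma\in\mathrm{Aut}_{\mathrm{Lie}}(W_n)$. Then $A_\sigma\in\mathrm{GL}_n(\mathbb{Z})$.
   Context: $W_n=\mathrm{Der}_K(K[x_1^{\pm1},\ldots,x_n^{\pm1}])$, $\mathcal{H}_n=\bigoplus_iKH_i$, $H_i=x_i\partial_i$. Every Lie automorphism $\sigma$ of $W_n$ satisfies $\sigma(\mathcal{H}_n)=\mathcal{H}_n$, and $A_\sigma=(a_{ij})\in\mathrm{GL}_n(K)$ is the unique matrix with $\sigma(H_i)=\sum_ja_{ij}H_j$ for all $i$. *)

theory Defs
  imports "HOL-Analysis.Analysis" "HOL-Library.Poly_Mapping"
begin

text \<open>Laurent polynomial ring K[x_i^{+-1} : i in 'n]: finitely supported functions from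
  exponent vectors (finitely supported 'n => int) to K, with convolution product.\<close>
type_synonym ('n, 'k) laurent = "('n \<Rightarrow>\<^sub>0 int) \<Rightarrow>\<^sub>0 'k"

definition lconst :: "'k::comm_ring_1 \<Rightarrow> ('n, 'k) laurent" where
  "lconst c = Poly_Mapping.single 0 c"

definition is_derivation :: "(('n, 'k::field) laurent \<Rightarrow> ('n, 'k) laurent) \<Rightarrow> bool" where
  "is_derivation D \<longleftrightarrow>
     (\<forall>f g. D (f + g) = D f + D g) \<and>
     (\<forall>c f. D (lconst c * f) = lconst c * D f) \<and>
     (\<forall>f g. D (f * g) = f * D g + D f * g)"

definition Witt :: "(('n, 'k::field) laurent \<Rightarrow> ('n, 'k) laurent) set" where
  "Witt = {D. is_derivation D}"

definition lie_bracket ::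
  "(('n, 'k::field) laurent \<Rightarrow> ('n, 'k) laurent) \<Rightarrow> (('n, 'k) laurent \<Rightarrow> ('n, 'k) laurent)
   \<Rightarrow> ('n, 'k) laurent \<Rightarrow> ('n, 'k) laurent" where
  "lie_bracket D E = (\<lambda>f. D (E f) - E (D f))"

definition der_scale :: "'k::field \<Rightarrow> (('n, 'k) laurent \<Rightarrow> ('n, 'k) laurent)
   \<Rightarrow> ('n, 'k) laurent \<Rightarrow> ('n, 'k) laurent" where
  "der_scale c D = (\<lambda>f. lconst c * D f)"

definition der_add :: "(('n, 'k::field) laurent \<Rightarrow> ('n, 'k) laurent) \<Rightarrow> (('n, 'k) laurent \<Rightarrow> ('n, 'k) laurent)
   \<Rightarrow> ('n, 'k) laurent \<Rightarrow> ('n, 'k) laurent" where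
  "der_add D E = (\<lambda>f. D f + E f)"

definition witt_lie_aut ::
  "((('n, 'k::field) laurent \<Rightarrow> ('n, 'k) laurent) \<Rightarrow> (('n, 'k) laurent \<Rightarrow> ('n, 'k) laurent)) \<Rightarrow> bool" where
  "witt_lie_aut \<sigma> \<longleftrightarrow>
     bij_betw \<sigma> Witt Witt \<and>
     (\<forall>D\<in>Witt. \<forall>E\<in>Witt. \<sigma> (der_add D E) = der_add (\<sigma> D) (\<sigma> E)) \<and>
     (\<forall>c. \<forall>D\<in>Witt. \<sigma> (der_scale c D) = der_scale c (\<sigma> D)) \<and>
     (\<forall>D\<in>Witt. \<forall>E\<in>Witt. \<sigma> (lie_bracket D E) = lie_bracket (\<sigma> D) (\<sigma> E))"

text \<open>H_i = x_i d/dx_i, acting by x^a \<mapsto> a_i x^a.\<close>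
definition Hder :: "'n \<Rightarrow> ('n, 'k::field) laurent \<Rightarrow> ('n, 'k) laurent" where
  "Hder i = (\<lambda>f. Poly_Mapping.mapp (\<lambda>a c. of_int (Poly_Mapping.lookup a i) * c) f)"

end

theory Submission
  imports Defs
begin

text \<open>Every derivation is \<open>D = \<Sum>\<^sub>j g\<^sub>j H\<^sub>j\<close> with \<open>g\<^sub>j = x\<^sub>j\<^sup>-\<^sup>1 D(x\<^sub>j)\<close>. The operator \<open>ad H\<^sub>i\<close> is
  diagonal on the monomial derivations \<open>x\<^sup>a H\<^sub>j\<close>, with eigenvalue \<open>a\<^sub>i\<close>; hence \<open>H\<^sub>i\<close> is ad-locally
  finite and all eigenvalues of \<open>ad H\<^sub>i\<close> are integers, and both properties pass to \<open>\<sigma>(H\<^sub>i)\<close>.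
  A locally finite derivation has constant coefficients: if its coefficients had a nonzero leading
  exponent \<open>b\<close> with respect to a translation-invariant total order on \<open>\<int>\<^sup>n\<close> in which \<open>b\<close> is
  positive, repeated brackets with a suitable monomial derivation would produce the leading exponents
  \<open>c, c + b, c + 2b, \<dots>\<close> with coefficients that are nonzero because the characteristic is zero.
  Since \<open>\<Sum>\<^sub>l d\<^sub>l H\<^sub>l\<close> acts on \<open>x\<^sub>j H\<^sub>j\<close> with eigenvalue \<open>d\<^sub>j\<close>, we get \<open>\<sigma>(H\<^sub>i) = \<Sum>\<^sub>j a\<^sub>i\<^sub>j H\<^sub>j\<close> with
  integers \<open>a\<^sub>i\<^sub>j\<close>. Finally \<open>\<sigma>\<^sup>-\<^sup>1(H\<^sub>k)\<close> commutes with all \<open>H\<^sub>i\<close>, so it also has constant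
  coefficients, which are integers by the eigenvalue argument; they form an integer inverse of \<open>A\<^sub>\<sigma>\<close>.\<close>

abbreviation lookup :: "('a \<Rightarrow>\<^sub>0 'b::zero) \<Rightarrow> 'a \<Rightarrow> 'b" where
  "lookup \<equiv> Poly_Mapping.lookup"

abbreviation keys :: "('a \<Rightarrow>\<^sub>0 'b::zero) \<Rightarrow> 'a set" where
  "keys \<equiv> Poly_Mapping.keys"

subsection \<open>Laurent polynomials and the Euler operators\<close>

definition lmonom :: "('n \<Rightarrow>\<^sub>0 int) \<Rightarrow> ('n, 'k::comm_ring_1) laurent" where
  "lmonom a = Poly_Mapping.single a 1"

definition unit_exp :: "'n \<Rightarrow> ('n \<Rightarrow>\<^sub>0 int)" where
  "unit_exp j = Poly_Mapping.single j 1"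

lemma lookup_unit_exp: "lookup (unit_exp k) j = (if j = k then 1 else 0)"
  by (simp add: unit_exp_def lookup_single when_def)

lemma lookup_lconst: "lookup (lconst c) a = (if a = 0 then c else 0)"
  by (simp add: lconst_def lookup_single when_def)

lemma lookup_lconst_mult: "lookup (lconst c * p) a = c * lookup p a"
proof -
  have "lconst c * p = Poly_Mapping.map ((*) c) p"
    by (simp add: lconst_def mult_map_scale_conv_mult)
  then show ?thesis by (simp add: Poly_Mapping.map.rep_eq when_def)
qed

lemma lconst_0 [simp]: "lconst 0 = 0"
  by (simp add: lconst_def)

lemma lconst_1 [simp]: "lconst 1 = 1"
  by (simp add: lconst_def)

lemma lconst_of_int: "lconst (of_int k) = of_int k"
  by (simp add: lconst_def)

lemma lconst_mult: "lconst a * lconst b = lconst (a * b)"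
  by (simp add: lconst_def mult_single)

lemma lconst_add: "lconst (a + b) = lconst a + lconst b"
  by (simp add: lconst_def single_add)

lemma lconst_inject: "lconst a = lconst b \<longleftrightarrow> a = b"
  by (metis lookup_lconst)

lemma lconst_sum: "lconst (sum f S) = (\<Sum>x\<in>S. lconst (f x))"
  by (induction S rule: infinite_finite_induct) (simp_all add: lconst_add)

lemma lookup_lmonom: "lookup (lmonom a) b = (if b = a then 1 else 0)"
  by (simp add: lmonom_def lookup_single when_def)

lemma lmonom_0 [simp]: "lmonom 0 = 1"
  by (simp add: lmonom_def)

lemma lmonom_mult: "lmonom a * lmonom b = lmonom (a + b)"
  by (simp add: lmonom_def mult_single)

lemma lmonom_uminus_mult: "lmonom (- a) * lmonom a = 1"
  by (simp add: lmonom_mult)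

lemma lmonom_uminus_cancel: "lmonom (- a) * (p * lmonom a) = p"
  by (metis lmonom_uminus_mult mult.commute mult.left_commute mult.right_neutral)

lemma laurent_expansion: "p = (\<Sum>a\<in>keys p. lconst (lookup p a) * lmonom a)"
  by (rule poly_mapping_eqI)
    (auto simp: lookup_sum lconst_def lmonom_def mult_single lookup_single when_def in_keys_iff)

definition laurent_linear :: "(('n, 'k::field) laurent \<Rightarrow> ('n, 'k) laurent) \<Rightarrow> bool" where
  "laurent_linear T \<longleftrightarrow>
     (\<forall>f g. T (f + g) = T f + T g) \<and> (\<forall>c f. T (lconst c * f) = lconst c * T f)"

lemma laurent_linear_zero: "laurent_linear T \<Longrightarrow> T 0 = 0"
  unfolding laurent_linear_def by (metis add_cancel_right_right add_0)

lemma laurent_linear_sum: "laurent_linear T \<Longrightarrow> T (sum F S) = (\<Sum>x\<in>S. T (F x))"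
  by (induction S rule: infinite_finite_induct) (auto simp: laurent_linear_zero laurent_linear_def)

lemma laurent_linear_expansion:
  assumes "laurent_linear T"
  shows "T p = (\<Sum>a\<in>keys p. lconst (lookup p a) * T (lmonom a))"
  by (subst laurent_expansion) (use assms in \<open>simp add: laurent_linear_sum laurent_linear_def\<close>)

lemma laurent_linear_eqI:
  assumes "laurent_linear T" "laurent_linear S" "\<And>a. T (lmonom a) = S (lmonom a)"
  shows "T p = S p"
  unfolding laurent_linear_expansion[OF assms(1), of p] laurent_linear_expansion[OF assms(2), of p]
    assms(3) ..

lemma laurent_linear_mult_left: "laurent_linear (\<lambda>g. f * g)"
  by (simp add: laurent_linear_def algebra_simps)

lemma laurent_linear_mult_right: "laurent_linear (\<lambda>g. g * f)"
  by (simp add: laurent_linear_def algebra_simps)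

lemma laurent_linear_comp: "laurent_linear T \<Longrightarrow> laurent_linear S \<Longrightarrow> laurent_linear (\<lambda>f. T (S f))"
  by (simp add: laurent_linear_def)

lemma laurent_linear_add:
  "laurent_linear T \<Longrightarrow> laurent_linear S \<Longrightarrow> laurent_linear (\<lambda>f. T f + S f)"
  unfolding laurent_linear_def by (simp add: algebra_simps)

lemma lookup_Hder: "lookup (Hder j f) a = of_int (lookup a j) * lookup f a"
  by (auto simp: Hder_def lookup_mapp when_def in_keys_iff)

lemma lookup_Hder_power: "lookup ((Hder i ^^ k) p) a = of_int (lookup a i) ^ k * lookup p a"
  by (induction k) (simp_all add: lookup_Hder)

lemma Hder_add: "Hder j (f + g) = Hder j f + Hder j g"
  by (rule poly_mapping_eqI) (simp add: lookup_Hder lookup_add distrib_left)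

lemma Hder_lconst_mult: "Hder j (lconst c * f) = lconst c * Hder j f"
  by (rule poly_mapping_eqI) (simp add: lookup_Hder lookup_lconst_mult mult.left_commute)

lemma laurent_linear_Hder: "laurent_linear (Hder j)"
  by (simp add: laurent_linear_def Hder_add Hder_lconst_mult)

lemma Hder_lmonom: "Hder j (lmonom a) = lconst (of_int (lookup a j)) * lmonom a"
  by (rule poly_mapping_eqI) (simp add: lookup_Hder lookup_lconst_mult lookup_lmonom)

lemma Hder_lconst: "Hder j (lconst c) = 0"
  by (rule poly_mapping_eqI) (simp add: lookup_Hder lookup_lconst)

text \<open>The Leibniz rule is bilinear in \<open>f\<close> and \<open>g\<close>, so it suffices to check it on monomials.\<close>
lemma Hder_mult: "Hder j (f * g) = f * Hder j g + Hder j f * g"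
proof (rule laurent_linear_eqI[where T = "\<lambda>g. Hder j (f * g)" and S = "\<lambda>g. f * Hder j g + Hder j f * g"])
  show "laurent_linear (\<lambda>g. Hder j (f * g))"
    by (rule laurent_linear_comp[OF laurent_linear_Hder laurent_linear_mult_left])
  show "laurent_linear (\<lambda>g. f * Hder j g + Hder j f * g)"
    by (rule laurent_linear_add[OF laurent_linear_comp[OF laurent_linear_mult_left laurent_linear_Hder]
          laurent_linear_mult_left])
  fix b
  show "Hder j (f * lmonom b) = f * Hder j (lmonom b) + Hder j f * lmonom b"
  proof (rule laurent_linear_eqI[where T = "\<lambda>f. Hder j (f * lmonom b)"
        and S = "\<lambda>f. f * Hder j (lmonom b) + Hder j f * lmonom b"])
    show "laurent_linear (\<lambda>f. Hder j (f * lmonom b))"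
      by (rule laurent_linear_comp[OF laurent_linear_Hder laurent_linear_mult_right])
    show "laurent_linear (\<lambda>f. f * Hder j (lmonom b) + Hder j f * lmonom b)"
      by (rule laurent_linear_add[OF laurent_linear_mult_right
            laurent_linear_comp[OF laurent_linear_mult_right laurent_linear_Hder]])
    fix a
    have ab: "lmonom a * lmonom b = lmonom (a + b)" by (rule lmonom_mult)
    show "Hder j (lmonom a * lmonom b) = lmonom a * Hder j (lmonom b) + Hder j (lmonom a) * lmonom b"
      by (simp add: ab Hder_lmonom lookup_add lconst_add algebra_simps) (simp add: algebra_simps flip: ab)
  qed
qed

subsection \<open>Derivations and their coefficients\<close>

lemma derivation_linear: "is_derivation D \<Longrightarrow> laurent_linear D"
  unfolding is_derivation_def laurent_linear_def by blast

lemma derivation_add: "is_derivation D \<Longrightarrow> D (f + g) = D f + D g"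
  unfolding is_derivation_def by blast

lemma derivation_lconst_mult: "is_derivation D \<Longrightarrow> D (lconst c * f) = lconst c * D f"
  unfolding is_derivation_def by blast

lemma derivation_mult: "is_derivation D \<Longrightarrow> D (f * g) = f * D g + D f * g"
  unfolding is_derivation_def by blast

lemma derivation_one: "is_derivation D \<Longrightarrow> D 1 = 0"
  using derivation_mult[of D 1 1] by simp

lemma derivation_lconst: "is_derivation D \<Longrightarrow> D (lconst c) = 0"
  using derivation_one[of D] derivation_linear[of D] unfolding laurent_linear_def
  by (metis mult.right_neutral mult_zero_right)

lemma Witt_iff: "D \<in> Witt \<longleftrightarrow> is_derivation D"
  by (simp add: Witt_def)

definition der_of_coeffs ::
  "('n::finite \<Rightarrow> ('n, 'k::field) laurent) \<Rightarrow> ('n, 'k) laurent \<Rightarrow> ('n, 'k) laurent" where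
  "der_of_coeffs g = (\<lambda>f. \<Sum>j\<in>UNIV. g j * Hder j f)"

text \<open>The logarithmic derivative \<open>x\<^sup>-\<^sup>a D(x\<^sup>a)\<close>; its values at the unit vectors are the
  coefficients of \<open>D = \<Sum>\<^sub>j g\<^sub>j H\<^sub>j\<close>.\<close>
definition logder :: "(('n, 'k::field) laurent \<Rightarrow> ('n, 'k) laurent) \<Rightarrow> ('n \<Rightarrow>\<^sub>0 int) \<Rightarrow> ('n, 'k) laurent" where
  "logder D a = lmonom (- a) * D (lmonom a)"

definition der_coeff :: "(('n, 'k::field) laurent \<Rightarrow> ('n, 'k) laurent) \<Rightarrow> 'n \<Rightarrow> ('n, 'k) laurent" where
  "der_coeff D j = logder D (unit_exp j)"

lemma Witt_der_of_coeffs: "der_of_coeffs g \<in> Witt"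
  unfolding Witt_iff is_derivation_def der_of_coeffs_def
proof (intro conjI allI)
  fix f h c
  show "(\<Sum>j\<in>UNIV. g j * Hder j (f + h)) = (\<Sum>j\<in>UNIV. g j * Hder j f) + (\<Sum>j\<in>UNIV. g j * Hder j h)"
    by (simp add: Hder_add distrib_left sum.distrib)
  show "(\<Sum>j\<in>UNIV. g j * Hder j (lconst c * f)) = lconst c * (\<Sum>j\<in>UNIV. g j * Hder j f)"
    by (simp only: Hder_lconst_mult sum_distrib_left mult.left_commute)
  show "(\<Sum>j\<in>UNIV. g j * Hder j (f * h)) = f * (\<Sum>j\<in>UNIV. g j * Hder j h) + (\<Sum>j\<in>UNIV. g j * Hder j f) * h"
    by (simp add: Hder_mult algebra_simps sum.distrib sum_distrib_left sum_distrib_right)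
qed

lemma der_of_coeffs_lconst: "der_of_coeffs g (lconst c) = 0"
  by (simp add: der_of_coeffs_def Hder_lconst)

lemma der_of_coeffs_lmonom: "der_of_coeffs g (lmonom a) = (\<Sum>j\<in>UNIV. of_int (lookup a j) * g j) * lmonom a"
  by (simp add: der_of_coeffs_def Hder_lmonom lconst_of_int sum_distrib_right sum_distrib_left mult_ac)

lemma der_coeff_der_of_coeffs: "der_coeff (der_of_coeffs g) k = g k"
proof -
  have "(\<Sum>j\<in>UNIV. of_int (lookup (unit_exp k) j) * g j) = (\<Sum>j\<in>UNIV. if j = k then g k else 0)"
    by (rule sum.cong) (simp_all add: lookup_unit_exp)
  then have "der_of_coeffs g (lmonom (unit_exp k)) = g k * lmonom (unit_exp k)"
    by (simp add: der_of_coeffs_lmonom)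
  then show ?thesis
    by (simp add: der_coeff_def logder_def lmonom_uminus_cancel)
qed

lemma logder_add:
  assumes "is_derivation D"
  shows "logder D (a + b) = logder D a + logder D b"
proof -
  have D: "D (lmonom (a + b)) = lmonom a * D (lmonom b) + D (lmonom a) * lmonom b"
    using derivation_mult[OF assms, of "lmonom a" "lmonom b"] by (simp add: lmonom_mult)
  have m: "lmonom (- (a + b)) = lmonom (- a) * lmonom (- b)"
    by (simp add: lmonom_mult)
  have "logder D (a + b) = (lmonom (- a) * lmonom (- b)) * (lmonom a * D (lmonom b) + D (lmonom a) * lmonom b)"
    unfolding logder_def D m by (rule refl)
  also have "\<dots> = (lmonom (- a) * lmonom a) * logder D b + (lmonom (- b) * lmonom b) * logder D a"
    by (simp add: logder_def algebra_simps)
  finally show ?thesis by (simp add: lmonom_uminus_mult)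
qed

lemma logder_0: "is_derivation D \<Longrightarrow> logder D 0 = 0"
  by (simp add: logder_def derivation_one)

lemma logder_sum: "is_derivation D \<Longrightarrow> logder D (sum G S) = (\<Sum>x\<in>S. logder D (G x))"
  by (induction S rule: infinite_finite_induct) (simp_all add: logder_0 logder_add)

lemma logder_single:
  assumes "is_derivation D"
  shows "logder D (Poly_Mapping.single j k) = of_int k * der_coeff D j"
proof (induction k rule: int_induct[where k = 0])
  case base
  show ?case by (simp add: logder_0[OF assms])
next
  case (step1 i)
  then show ?case
    by (simp add: single_add logder_add[OF assms] der_coeff_def unit_exp_def distrib_right)
next
  case (step2 i)
  have "logder D (Poly_Mapping.single j i) = logder D (Poly_Mapping.single j (i - 1)) + der_coeff D j"
    using logder_add[OF assms, of "Poly_Mapping.single j (i - 1)" "unit_exp j"]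
    by (simp add: der_coeff_def unit_exp_def flip: single_add)
  with step2 show ?case by (simp add: algebra_simps)
qed

lemma logder_eq_sum:
  fixes a :: "'n::finite \<Rightarrow>\<^sub>0 int"
  assumes "is_derivation D"
  shows "logder D a = (\<Sum>j\<in>UNIV. of_int (lookup a j) * der_coeff D j)"
proof -
  have "a = (\<Sum>j\<in>UNIV. Poly_Mapping.single j (lookup a j))"
    by (rule poly_mapping_eqI) (simp add: lookup_sum lookup_single when_def)
  then have "logder D a = (\<Sum>j\<in>UNIV. logder D (Poly_Mapping.single j (lookup a j)))"
    by (metis logder_sum[OF assms])
  also have "\<dots> = (\<Sum>j\<in>UNIV. of_int (lookup a j) * der_coeff D j)"
    by (simp only: logder_single[OF assms])
  finally show ?thesis .
qed

lemma lmonom_mult_logder: "lmonom a * logder D a = D (lmonom a)"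
  using lmonom_uminus_cancel[of a "D (lmonom a)"] by (simp add: logder_def mult_ac)

lemma der_of_coeffs_der_coeff:
  fixes D :: "('n::finite, 'k::field) laurent \<Rightarrow> ('n, 'k) laurent"
  assumes "D \<in> Witt"
  shows "der_of_coeffs (der_coeff D) = D"
proof
  fix p
  have D: "is_derivation D" using assms by (simp add: Witt_iff)
  show "der_of_coeffs (der_coeff D) p = D p"
  proof (rule laurent_linear_eqI[where T = "der_of_coeffs (der_coeff D)" and S = D])
    show "laurent_linear (der_of_coeffs (der_coeff D))"
      using Witt_der_of_coeffs Witt_iff derivation_linear by blast
    show "laurent_linear D" using D by (rule derivation_linear)
    fix a
    have "D (lmonom a) = logder D a * lmonom a"
      using lmonom_mult_logder[of a D] by (simp add: mult.commute)
    also have "\<dots> = der_of_coeffs (der_coeff D) (lmonom a)"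
      by (simp only: der_of_coeffs_lmonom logder_eq_sum[OF D])
    finally show "der_of_coeffs (der_coeff D) (lmonom a) = D (lmonom a)" ..
  qed
qed

lemma Witt_eqI:
  fixes D E :: "('n::finite, 'k::field) laurent \<Rightarrow> ('n, 'k) laurent"
  assumes "D \<in> Witt" "E \<in> Witt" "\<And>j. der_coeff D j = der_coeff E j"
  shows "D = E"
proof -
  have "der_coeff D = der_coeff E" using assms(3) ..
  then have "der_of_coeffs (der_coeff D) = der_of_coeffs (der_coeff E)" by (rule arg_cong)
  then show ?thesis unfolding der_of_coeffs_der_coeff[OF assms(1)] der_of_coeffs_der_coeff[OF assms(2)] .
qed

definition der_zero :: "('n, 'k::field) laurent \<Rightarrow> ('n, 'k) laurent" where
  "der_zero = (\<lambda>f. 0)"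

lemma Witt_der_zero: "der_zero \<in> Witt"
  by (simp add: Witt_iff is_derivation_def der_zero_def)

lemma Witt_der_add:
  assumes "D \<in> Witt" "E \<in> Witt"
  shows "der_add D E \<in> Witt"
proof -
  have D: "is_derivation D" and E: "is_derivation E" using assms by (simp_all add: Witt_iff)
  show ?thesis
    unfolding Witt_iff is_derivation_def der_add_def
  proof (intro conjI allI)
    fix f g c
    show "D (f + g) + E (f + g) = D f + E f + (D g + E g)"
      by (simp only: derivation_add[OF D] derivation_add[OF E] add_ac)
    show "D (lconst c * f) + E (lconst c * f) = lconst c * (D f + E f)"
      by (simp only: derivation_lconst_mult[OF D] derivation_lconst_mult[OF E] distrib_left)
    show "D (f * g) + E (f * g) = f * (D g + E g) + (D f + E f) * g"
      by (simp only: derivation_mult[OF D] derivation_mult[OF E] algebra_simps)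
  qed
qed

lemma Witt_der_scale:
  assumes "D \<in> Witt"
  shows "der_scale c D \<in> Witt"
proof -
  have D: "is_derivation D" using assms by (simp add: Witt_iff)
  show ?thesis
    unfolding Witt_iff is_derivation_def der_scale_def
  proof (intro conjI allI)
    fix f g d
    show "lconst c * D (f + g) = lconst c * D f + lconst c * D g"
      by (simp only: derivation_add[OF D] distrib_left)
    show "lconst c * D (lconst d * f) = lconst d * (lconst c * D f)"
      by (simp only: derivation_lconst_mult[OF D] mult.left_commute)
    show "lconst c * D (f * g) = f * (lconst c * D g) + lconst c * D f * g"
      by (simp only: derivation_mult[OF D] algebra_simps)
  qed
qed

lemma Witt_lie_bracket:
  assumes "D \<in> Witt" "E \<in> Witt"
  shows "lie_bracket D E \<in> Witt"
proof -
  have D: "is_derivation D" and E: "is_derivation E" using assms by (simp_all add: Witt_iff)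
  show ?thesis
    unfolding Witt_iff is_derivation_def lie_bracket_def
  proof (intro conjI allI)
    fix f g c
    show "D (E (f + g)) - E (D (f + g)) = D (E f) - E (D f) + (D (E g) - E (D g))"
      by (simp add: derivation_add[OF D] derivation_add[OF E])
    show "D (E (lconst c * f)) - E (D (lconst c * f)) = lconst c * (D (E f) - E (D f))"
      by (simp only: derivation_lconst_mult[OF D] derivation_lconst_mult[OF E] right_diff_distrib)
    show "D (E (f * g)) - E (D (f * g)) = f * (D (E g) - E (D g)) + (D (E f) - E (D f)) * g"
      by (simp add: derivation_mult[OF D] derivation_mult[OF E] derivation_add[OF D]
          derivation_add[OF E] algebra_simps)
  qed
qed

lemma der_coeff_der_zero: "der_coeff der_zero k = 0"
  by (simp add: der_coeff_def logder_def der_zero_def)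

lemma der_coeff_der_add: "der_coeff (der_add D E) k = der_coeff D k + der_coeff E k"
  by (simp add: der_coeff_def logder_def der_add_def algebra_simps)

lemma der_coeff_der_scale: "der_coeff (der_scale c D) k = lconst c * der_coeff D k"
  by (simp add: der_coeff_def logder_def der_scale_def algebra_simps)

lemma der_coeff_lie_bracket:
  assumes D: "D \<in> Witt" and E: "E \<in> Witt"
  shows "der_coeff (lie_bracket D E) k = D (der_coeff E k) - E (der_coeff D k)"
proof -
  let ?x = "lmonom (unit_exp k)"
  have "is_derivation D" "is_derivation E" using D E by (simp_all add: Witt_iff)
  note derivation_mult[OF this(1)] derivation_mult[OF this(2)]
  moreover have "D ?x = ?x * der_coeff D k" "E ?x = ?x * der_coeff E k"
    using lmonom_mult_logder[of "unit_exp k" D] lmonom_mult_logder[of "unit_exp k" E]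
    by (simp_all add: der_coeff_def)
  ultimately have "lie_bracket D E ?x = ?x * (D (der_coeff E k) - E (der_coeff D k))"
    by (simp add: lie_bracket_def algebra_simps)
  then show ?thesis
    by (simp add: der_coeff_def logder_def lmonom_uminus_cancel mult.commute[of ?x])
qed

lemma Witt_Hder: "Hder i \<in> Witt"
  unfolding Witt_iff is_derivation_def by (intro conjI allI Hder_add Hder_lconst_mult Hder_mult)

lemma der_coeff_Hder: "der_coeff (Hder i) j = (if i = j then 1 else 0)"
  by (cases "i = j")
    (simp_all add: der_coeff_def logder_def Hder_lmonom lookup_unit_exp lmonom_uminus_cancel
      lmonom_uminus_mult)

lemma der_coeff_bracket_Hder:
  assumes "X \<in> Witt"
  shows "der_coeff (lie_bracket (Hder i) X) j = Hder i (der_coeff X j)"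
    and "der_coeff (lie_bracket X (Hder i)) j = - Hder i (der_coeff X j)"
proof -
  have X: "is_derivation X" using assms by (simp add: Witt_iff)
  have "X (der_coeff (Hder i) j) = 0"
    using derivation_lconst[OF X, of 1] derivation_lconst[OF X, of 0] by (simp add: der_coeff_Hder)
  then show "der_coeff (lie_bracket (Hder i) X) j = Hder i (der_coeff X j)"
    and "der_coeff (lie_bracket X (Hder i)) j = - Hder i (der_coeff X j)"
    by (simp_all add: der_coeff_lie_bracket[OF Witt_Hder assms] der_coeff_lie_bracket[OF assms Witt_Hder])
qed

subsection \<open>Translation-invariant orders on exponents\<close>

locale monomial_order =
  fixes less :: "'a::ab_group_add \<Rightarrow> 'a \<Rightarrow> bool" (infix "\<sqsubset>" 50)
  assumes irrefl: "\<not> a \<sqsubset> a"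
    and trans: "a \<sqsubset> b \<Longrightarrow> b \<sqsubset> c \<Longrightarrow> a \<sqsubset> c"
    and total: "a \<noteq> b \<Longrightarrow> a \<sqsubset> b \<or> b \<sqsubset> a"
    and add_right_strict_mono: "a \<sqsubset> b \<Longrightarrow> a + c \<sqsubset> b + c"
begin

abbreviation less_eq (infix "\<sqsubseteq>" 50) where
  "a \<sqsubseteq> b \<equiv> a \<sqsubset> b \<or> a = b"

definition supp_below :: "'a \<Rightarrow> ('a \<Rightarrow>\<^sub>0 'k::zero) \<Rightarrow> bool" where
  "supp_below B p \<longleftrightarrow> (\<forall>x\<in>keys p. x \<sqsubseteq> B)"

lemma add_left_strict_mono: "a \<sqsubset> b \<Longrightarrow> c + a \<sqsubset> c + b"
  using add_right_strict_mono[of a b c] by (simp add: add.commute)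

lemma add_strict_mono_le:
  assumes "x \<sqsubseteq> b" "y \<sqsubseteq> c" "x \<sqsubset> b \<or> y \<sqsubset> c"
  shows "x + y \<sqsubset> b + c"
proof (cases "x \<sqsubset> b")
  case True
  then have "x + y \<sqsubset> b + y" by (rule add_right_strict_mono)
  moreover have "b + y \<sqsubseteq> b + c" using assms(2) add_left_strict_mono by blast
  ultimately show ?thesis using trans[of "x + y" "b + y" "b + c"] by auto
next
  case False
  then have "x = b" "y \<sqsubset> c" using assms by auto
  then show ?thesis using add_left_strict_mono by simp
qed

lemma add_eq_top_imp_eq:
  assumes "x \<sqsubseteq> b" "y \<sqsubseteq> c" "x + y = b + c"
  shows "x = b \<and> y = c"
proof -
  have "\<not> (x \<sqsubset> b \<or> y \<sqsubset> c)"
    using add_strict_mono_le[OF assms(1,2)] assms(3) irrefl by auto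
  then show ?thesis using assms by auto
qed

lemma iterate_add_strict_mono:
  assumes "0 \<sqsubset> b" "k < l"
  shows "((+) b ^^ k) c \<sqsubset> ((+) b ^^ l) c"
  using assms(2)
proof (induction l)
  case 0
  then show ?case by simp
next
  case (Suc l)
  have "((+) b ^^ l) c \<sqsubset> ((+) b ^^ Suc l) c"
    using add_right_strict_mono[OF assms(1), of "((+) b ^^ l) c"] by simp
  with Suc show ?case using trans[of "((+) b ^^ k) c" "((+) b ^^ l) c"] by (cases "k = l") auto
qed

lemma inj_iterate_add: "0 \<sqsubset> b \<Longrightarrow> inj (\<lambda>k. ((+) b ^^ k) c)"
  by (rule injI) (metis iterate_add_strict_mono irrefl linorder_neqE_nat)

lemma finite_has_greatest:
  assumes "finite S" "S \<noteq> {}"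
  shows "\<exists>m\<in>S. \<forall>x\<in>S. x \<sqsubseteq> m"
  using assms
proof (induction S rule: finite_ne_induct)
  case (singleton x)
  then show ?case by simp
next
  case (insert x F)
  then obtain m where m: "m \<in> F" "\<forall>y\<in>F. y \<sqsubseteq> m" by blast
  show ?case
  proof (cases "m \<sqsubset> x")
    case True
    have "y \<sqsubseteq> x" if "y \<in> insert x F" for y
      using that m True trans[of y m x] by auto
    then show ?thesis by blast
  next
    case False
    then have "x \<sqsubseteq> m" using total[of x m] by auto
    then show ?thesis using m by blast
  qed
qed

lemma supp_below_0: "supp_below B 0"
  by (simp add: supp_below_def)

lemma supp_below_add: "supp_below B p \<Longrightarrow> supp_below B q \<Longrightarrow> supp_below B (p + q)"
  using keys_add[of p q] unfolding supp_below_def by blast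

lemma supp_below_diff:
  "supp_below B p \<Longrightarrow> supp_below B q \<Longrightarrow> supp_below B (p - q :: 'a \<Rightarrow>\<^sub>0 'k::ab_group_add)"
  unfolding supp_below_def by (metis in_keys_iff lookup_minus diff_self)

lemma supp_below_sum: "(\<And>x. x \<in> S \<Longrightarrow> supp_below B (F x)) \<Longrightarrow> supp_below B (sum F S)"
  by (induction S rule: infinite_finite_induct) (auto simp: supp_below_0 supp_below_add)

text \<open>In a product of polynomials supported below \<open>B\<close> and \<open>C\<close>, the exponent \<open>B + C\<close> arises in
  only one way, so its coefficient is the product of the leading coefficients.\<close>
lemma supp_below_mult:
  fixes p q :: "'a \<Rightarrow>\<^sub>0 'k::comm_semiring_0"
  assumes p: "supp_below B p" and q: "supp_below C q"
  shows "supp_below (B + C) (p * q)"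
    and "lookup (p * q) (B + C) = lookup p B * lookup q C"
proof -
  show "supp_below (B + C) (p * q)"
    unfolding supp_below_def
  proof
    fix x assume "x \<in> keys (p * q)"
    then obtain a b where "x = a + b" "a \<in> keys p" "b \<in> keys q"
      using keys_mult by blast
    moreover from this(2,3) have "a \<sqsubseteq> B" "b \<sqsubseteq> C"
      using p q unfolding supp_below_def by blast+
    ultimately show "x \<sqsubseteq> B + C"
      using add_strict_mono_le[of a B b C] by auto
  qed
  have inner: "(\<Sum>r. lookup q r when B + C = l + r) = lookup q (B + C - l)" for l
  proof -
    have "B + C = l + r \<longleftrightarrow> r = B + C - l" for r
      by (auto simp: algebra_simps)
    then show ?thesis by simp
  qed
  have key: "lookup p l * lookup q (B + C - l) = (if l = B then lookup p B * lookup q C else 0)" for l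
  proof (cases "lookup p l \<noteq> 0 \<and> lookup q (B + C - l) \<noteq> 0")
    case True
    then have "l \<sqsubseteq> B" "B + C - l \<sqsubseteq> C"
      using p q unfolding supp_below_def by (auto simp: in_keys_iff)
    moreover have "l + (B + C - l) = B + C" by (simp add: algebra_simps)
    ultimately have "l = B" by (rule add_eq_top_imp_eq[THEN conjunct1])
    then show ?thesis by simp
  qed auto
  have "lookup (p * q) (B + C) = (\<Sum>l. if l = B then lookup p B * lookup q C else 0)"
    by (simp only: lookup_mult inner key)
  also have "\<dots> = lookup p B * lookup q C"
    by (rule Sum_any.delta)
  finally show "lookup (p * q) (B + C) = lookup p B * lookup q C" .
qed

end

lemma (in monomial_order) monomial_order_converse: "monomial_order (\<lambda>a b. b \<sqsubset> a)"
proof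
  fix a b c
  show "\<not> a \<sqsubset> a" by (rule irrefl)
  show "c \<sqsubset> a" if "b \<sqsubset> a" "c \<sqsubset> b" using trans that by blast
  show "b \<sqsubset> a \<or> a \<sqsubset> b" if "a \<noteq> b" using total that by blast
  show "b + c \<sqsubset> a + c" if "b \<sqsubset> a" using add_right_strict_mono that by blast
qed

definition lex_less :: "('n::countable \<Rightarrow>\<^sub>0 int) \<Rightarrow> ('n \<Rightarrow>\<^sub>0 int) \<Rightarrow> bool" where
  "lex_less a b \<longleftrightarrow>
     (\<exists>j. lookup a j < lookup b j \<and> (\<forall>i. to_nat i < to_nat j \<longrightarrow> lookup a i = lookup b i))"

lemma lex_less_trans:
  fixes a b c :: "'n::countable \<Rightarrow>\<^sub>0 int"
  assumes "lex_less a b" "lex_less b c"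
  shows "lex_less a c"
proof -
  obtain j1 where j1: "lookup a j1 < lookup b j1" "\<forall>i. to_nat i < to_nat j1 \<longrightarrow> lookup a i = lookup b i"
    using assms(1) unfolding lex_less_def by blast
  obtain j2 where j2: "lookup b j2 < lookup c j2" "\<forall>i. to_nat i < to_nat j2 \<longrightarrow> lookup b i = lookup c i"
    using assms(2) unfolding lex_less_def by blast
  consider "to_nat j1 < to_nat j2" | "to_nat j2 < to_nat j1" | "j1 = j2"
    by (metis linorder_neqE_nat to_nat_split)
  then show ?thesis
  proof cases
    case 1
    then show ?thesis unfolding lex_less_def using j1 j2 by (intro exI[of _ j1]) auto
  next
    case 2
    then show ?thesis unfolding lex_less_def using j1 j2 by (intro exI[of _ j2]) auto
  next
    case 3
    then show ?thesis unfolding lex_less_def using j1 j2 by (intro exI[of _ j1]) auto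
  qed
qed

lemma lex_less_total:
  fixes a b :: "'n::countable \<Rightarrow>\<^sub>0 int"
  assumes "a \<noteq> b"
  shows "lex_less a b \<or> lex_less b a"
proof -
  define S where "S = {j. lookup a j \<noteq> lookup b j}"
  have "S \<noteq> {}"
    using assms by (auto simp: S_def intro!: poly_mapping_eqI)
  moreover have "finite S"
    by (rule finite_subset[of _ "keys a \<union> keys b"]) (auto simp: S_def in_keys_iff)
  ultimately have "Min (to_nat ` S) \<in> to_nat ` S"
    by simp
  then obtain j where j: "j \<in> S" "to_nat j = Min (to_nat ` S)"
    by auto
  have below: "lookup a i = lookup b i" if "to_nat i < to_nat j" for i
  proof (rule ccontr)
    assume "lookup a i \<noteq> lookup b i"
    then have "Min (to_nat ` S) \<le> to_nat i" using \<open>finite S\<close> by (simp add: S_def)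
    with that j show False by simp
  qed
  from j(1) have "lookup a j < lookup b j \<or> lookup b j < lookup a j"
    by (auto simp: S_def)
  then show ?thesis
  proof
    assume "lookup a j < lookup b j"
    then show ?thesis unfolding lex_less_def using below by (intro disjI1 exI[of _ j]) auto
  next
    assume "lookup b j < lookup a j"
    then show ?thesis unfolding lex_less_def using below by (intro disjI2 exI[of _ j]) auto
  qed
qed

lemma monomial_order_lex_less: "monomial_order (lex_less :: ('n::countable \<Rightarrow>\<^sub>0 int) \<Rightarrow> _)"
proof
  fix a b c :: "'n \<Rightarrow>\<^sub>0 int"
  show "\<not> lex_less a a" by (simp add: lex_less_def)
  show "lex_less a c" if "lex_less a b" "lex_less b c" using that by (rule lex_less_trans)
  show "lex_less a b \<or> lex_less b a" if "a \<noteq> b" using that by (rule lex_less_total)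
  show "lex_less (a + c) (b + c)" if "lex_less a b" using that by (simp add: lex_less_def lookup_add)
qed

subsection \<open>Locally finite derivations have constant coefficients\<close>

inductive_set der_span ::
  "(('n, 'k::field) laurent \<Rightarrow> ('n, 'k) laurent) set \<Rightarrow> (('n, 'k) laurent \<Rightarrow> ('n, 'k) laurent) set"
  for Z
where
  zero: "der_zero \<in> der_span Z"
| base: "X \<in> Z \<Longrightarrow> X \<in> der_span Z"
| add: "X \<in> der_span Z \<Longrightarrow> Y \<in> der_span Z \<Longrightarrow> der_add X Y \<in> der_span Z"
| scale: "X \<in> der_span Z \<Longrightarrow> der_scale c X \<in> der_span Z"

definition ad_locally_finite :: "(('n, 'k::field) laurent \<Rightarrow> ('n, 'k) laurent) \<Rightarrow> bool" where
  "ad_locally_finite D \<longleftrightarrow>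
     (\<forall>Y\<in>Witt. \<exists>Z. finite Z \<and> Z \<subseteq> Witt \<and> (\<forall>k. (lie_bracket D ^^ k) Y \<in> der_span Z))"

lemma Witt_der_span: "X \<in> der_span Z \<Longrightarrow> Z \<subseteq> Witt \<Longrightarrow> X \<in> Witt"
  by (induction X rule: der_span.induct) (auto intro: Witt_der_zero Witt_der_add Witt_der_scale)

lemma keys_der_coeff_der_span:
  "X \<in> der_span Z \<Longrightarrow> keys (der_coeff X j) \<subseteq> (\<Union>Y\<in>Z. \<Union>i. keys (der_coeff Y i))"
proof (induction X rule: der_span.induct)
  case zero
  then show ?case by (simp add: der_coeff_der_zero)
next
  case (base X)
  then show ?case by blast
next
  case (add X Y)
  then show ?case using keys_add[of "der_coeff X j" "der_coeff Y j"] by (auto simp: der_coeff_der_add)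
next
  case (scale X c)
  then show ?case by (auto simp: der_coeff_der_scale in_keys_iff lookup_lconst_mult)
qed

lemma der_span_lin_comb:
  assumes "finite A" "\<And>a. a \<in> A \<Longrightarrow> X a \<in> der_span Z"
  shows "\<exists>W\<in>der_span Z. \<forall>j. der_coeff W j = (\<Sum>a\<in>A. lconst (c a) * der_coeff (X a) j)"
  using assms
proof (induction A rule: finite_induct)
  case empty
  show ?case by (intro bexI[of _ der_zero] der_span.zero) (simp add: der_coeff_der_zero)
next
  case (insert a A)
  then obtain W where W: "W \<in> der_span Z" "\<forall>j. der_coeff W j = (\<Sum>a\<in>A. lconst (c a) * der_coeff (X a) j)"
    by auto
  with insert show ?case
    by (intro bexI[of _ "der_add (der_scale (c a) (X a)) W"] der_span.add der_span.scale)
      (auto simp: der_coeff_der_add der_coeff_der_scale)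
qed

definition exp_pairing :: "('n::finite \<Rightarrow> 'k::comm_ring_1) \<Rightarrow> ('n \<Rightarrow>\<^sub>0 int) \<Rightarrow> 'k" where
  "exp_pairing v a = (\<Sum>j\<in>UNIV. v j * of_int (lookup a j))"

lemma exp_pairing_add: "exp_pairing v (a + b) = exp_pairing v a + exp_pairing v b"
  by (simp add: exp_pairing_def lookup_add distrib_left sum.distrib)

lemma exp_pairing_scale: "exp_pairing (\<lambda>j. c * v j) a = c * exp_pairing v a"
  by (simp add: exp_pairing_def sum_distrib_left mult.assoc)

lemma exp_pairing_unit_exp: "exp_pairing v (unit_exp l) = v l"
proof -
  have "exp_pairing v (unit_exp l) = (\<Sum>j\<in>UNIV. if j = l then v l else 0)"
    unfolding exp_pairing_def by (rule sum.cong) (auto simp: lookup_unit_exp)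
  then show ?thesis by simp
qed

lemma exp_pairing_iterate_add:
  "exp_pairing v (((+) b ^^ k) c) = exp_pairing v c + of_nat k * exp_pairing v b"
  by (induction k) (simp_all add: exp_pairing_add algebra_simps)

text \<open>This is where the characteristic zero hypothesis enters.\<close>
lemma exp_pairing_iterate_nonzero:
  fixes v :: "'n::finite \<Rightarrow> 'k::field_char_0"
  assumes "v j0 \<noteq> 0"
  obtains c where "\<And>i. exp_pairing v (((+) b ^^ i) c) - exp_pairing v b \<noteq> 0"
proof (cases "exp_pairing v b = 0")
  case True
  then show ?thesis
    using assms by (intro that[of "unit_exp j0"]) (simp add: exp_pairing_iterate_add exp_pairing_unit_exp)
next
  case False
  have "exp_pairing v (((+) b ^^ i) (b + b)) - exp_pairing v b = (of_nat i + 1) * exp_pairing v b" for i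
    by (simp add: exp_pairing_iterate_add exp_pairing_add algebra_simps)
  moreover have "(of_nat i + 1 :: 'k) \<noteq> 0" for i
    by (metis of_nat_Suc of_nat_eq_0_iff nat.distinct(1) add.commute)
  ultimately show ?thesis
    using False by (intro that[of "b + b"]) simp
qed

locale exponent_order = monomial_order less
  for less :: "('n::finite \<Rightarrow>\<^sub>0 int) \<Rightarrow> ('n \<Rightarrow>\<^sub>0 int) \<Rightarrow> bool" (infix "\<sqsubset>" 50)
begin

lemma supp_below_Hder: "supp_below B p \<Longrightarrow> supp_below B (Hder j p)"
  by (auto simp: supp_below_def in_keys_iff lookup_Hder)

lemma supp_below_lconst_mult_lmonom: "supp_below c (lconst d * lmonom c)"
  by (auto simp: supp_below_def in_keys_iff lookup_lconst_mult lookup_lmonom)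

lemma der_coeff_bracket_leading:
  fixes g u :: "'n \<Rightarrow> ('n, 'k::field) laurent"
  assumes g: "\<And>j. supp_below b (g j)" and u: "\<And>j. supp_below t (u j)"
  shows "supp_below (b + t) (der_coeff (lie_bracket (der_of_coeffs g) (der_of_coeffs u)) k)"
    and "lookup (der_coeff (lie_bracket (der_of_coeffs g) (der_of_coeffs u)) k) (b + t) =
       exp_pairing (\<lambda>j. lookup (g j) b) t * lookup (u k) t -
       exp_pairing (\<lambda>j. lookup (u j) t) b * lookup (g k) b"
proof -
  have coeff: "der_coeff (lie_bracket (der_of_coeffs g) (der_of_coeffs u)) k =
      (\<Sum>j\<in>UNIV. g j * Hder j (u k)) - (\<Sum>j\<in>UNIV. u j * Hder j (g k))"
    by (simp only: der_coeff_lie_bracket[OF Witt_der_of_coeffs Witt_der_of_coeffs] der_coeff_der_of_coeffs)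
      (simp add: der_of_coeffs_def)
  have gu: "supp_below (b + t) (g j * Hder j (u k))"
      "lookup (g j * Hder j (u k)) (b + t) = lookup (g j) b * (of_int (lookup t j) * lookup (u k) t)"
    for j
    using supp_below_mult[OF g supp_below_Hder[OF u]] by (simp_all add: lookup_Hder)
  have ug: "supp_below (b + t) (u j * Hder j (g k))"
      "lookup (u j * Hder j (g k)) (b + t) = lookup (u j) t * (of_int (lookup b j) * lookup (g k) b)"
    for j
    using supp_below_mult[OF u supp_below_Hder[OF g]] by (simp_all add: lookup_Hder add.commute)
  show "supp_below (b + t) (der_coeff (lie_bracket (der_of_coeffs g) (der_of_coeffs u)) k)"
    unfolding coeff by (intro supp_below_diff supp_below_sum gu ug)
  show "lookup (der_coeff (lie_bracket (der_of_coeffs g) (der_of_coeffs u)) k) (b + t) =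
      exp_pairing (\<lambda>j. lookup (g j) b) t * lookup (u k) t -
      exp_pairing (\<lambda>j. lookup (u j) t) b * lookup (g k) b"
    unfolding coeff
    by (simp add: lookup_minus lookup_sum gu ug exp_pairing_def sum_distrib_left sum_distrib_right mult_ac)
qed

lemma iterate_bracket_leading:
  fixes g :: "'n \<Rightarrow> ('n, 'k::field) laurent" and b c :: "'n \<Rightarrow>\<^sub>0 int"
  assumes g: "\<And>j. supp_below b (g j)"
  defines "v \<equiv> \<lambda>j. lookup (g j) b"
  defines "Y \<equiv> \<lambda>k. (lie_bracket (der_of_coeffs g) ^^ k) (der_of_coeffs (\<lambda>j. lconst (v j) * lmonom c))"
  shows "Y k \<in> Witt \<and> (\<forall>j. supp_below (((+) b ^^ k) c) (der_coeff (Y k) j)) \<and>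
    (\<forall>j. lookup (der_coeff (Y k) j) (((+) b ^^ k) c) =
      (\<Prod>i<k. exp_pairing v (((+) b ^^ i) c) - exp_pairing v b) * v j)"
proof (induction k)
  case 0
  show ?case
    by (simp add: Y_def Witt_der_of_coeffs der_coeff_der_of_coeffs supp_below_lconst_mult_lmonom
        lookup_lconst_mult lookup_lmonom)
next
  case (Suc k)
  define t where "t = ((+) b ^^ k) c"
  define \<alpha> where "\<alpha> = (\<Prod>i<k. exp_pairing v (((+) b ^^ i) c) - exp_pairing v b)"
  have IH: "Y k \<in> Witt" "\<And>j. supp_below t (der_coeff (Y k) j)" "\<And>j. lookup (der_coeff (Y k) j) t = \<alpha> * v j"
    using Suc.IH unfolding t_def \<alpha>_def by blast+
  have Y: "Y (Suc k) = lie_bracket (der_of_coeffs g) (der_of_coeffs (der_coeff (Y k)))"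
    using der_of_coeffs_der_coeff[OF IH(1)] by (simp add: Y_def)
  have lead: "lookup (der_coeff (Y (Suc k)) j) (b + t) = \<alpha> * (exp_pairing v t - exp_pairing v b) * v j"
    for j
  proof -
    have "lookup (der_coeff (Y (Suc k)) j) (b + t) =
        exp_pairing v t * (\<alpha> * v j) - (\<alpha> * exp_pairing v b) * v j"
      unfolding Y der_coeff_bracket_leading(2)[OF g IH(2)] by (simp add: IH(3) exp_pairing_scale v_def)
    then show ?thesis by (simp add: algebra_simps)
  qed
  have "Y (Suc k) \<in> Witt"
    unfolding Y by (intro Witt_lie_bracket Witt_der_of_coeffs)
  moreover have "supp_below (b + t) (der_coeff (Y (Suc k)) j)" for j
    unfolding Y by (rule der_coeff_bracket_leading(1)[OF g IH(2)])
  moreover have "((+) b ^^ Suc k) c = b + t"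
    by (simp add: t_def)
  moreover have "(\<Prod>i<Suc k. exp_pairing v (((+) b ^^ i) c) - exp_pairing v b) =
      \<alpha> * (exp_pairing v t - exp_pairing v b)"
    by (simp add: \<alpha>_def t_def)
  ultimately show ?case using lead by (simp only:) blast
qed

text \<open>Otherwise the iterates of \<open>ad D\<close> on \<open>\<Sum>\<^sub>j g\<^sub>j(b) x\<^sup>c H\<^sub>j\<close> would have the infinitely many distinct
  leading exponents \<open>c + k b\<close>, although they lie in a finite-dimensional span.\<close>
lemma ad_locally_finite_leading_exponent_not_pos:
  fixes D :: "('n, 'k::field_char_0) laurent \<Rightarrow> ('n, 'k) laurent"
  assumes D: "D \<in> Witt" "ad_locally_finite D"
    and b: "\<And>j. supp_below b (der_coeff D j)" and j0: "lookup (der_coeff D j0) b \<noteq> 0"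
  shows "\<not> 0 \<sqsubset> b"
proof
  assume "0 \<sqsubset> b"
  define v where "v = (\<lambda>j. lookup (der_coeff D j) b)"
  obtain c where c: "\<And>i. exp_pairing v (((+) b ^^ i) c) - exp_pairing v b \<noteq> 0"
    using exp_pairing_iterate_nonzero[of v j0] j0 by (auto simp: v_def)
  define Y where "Y k = (lie_bracket D ^^ k) (der_of_coeffs (\<lambda>j. lconst (v j) * lmonom c))" for k
  obtain Z where Z: "finite Z" "\<And>k. Y k \<in> der_span Z"
    using D(2) Witt_der_of_coeffs unfolding ad_locally_finite_def Y_def by blast
  have "((+) b ^^ k) c \<in> keys (der_coeff (Y k) j0)" for k
  proof -
    have "lookup (der_coeff (Y k) j0) (((+) b ^^ k) c) =
        (\<Prod>i<k. exp_pairing v (((+) b ^^ i) c) - exp_pairing v b) * v j0"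
      using iterate_bracket_leading[where g = "der_coeff D" and b = b and c = c and k = k] b
      by (simp add: Y_def v_def der_of_coeffs_der_coeff[OF D(1)])
    then show ?thesis using c j0 by (simp add: in_keys_iff v_def)
  qed
  then have "range (\<lambda>k. ((+) b ^^ k) c) \<subseteq> (\<Union>X\<in>Z. \<Union>i. keys (der_coeff X i))"
    using keys_der_coeff_der_span[OF Z(2)] by blast
  moreover have "finite (\<Union>X\<in>Z. \<Union>i. keys (der_coeff X i))"
    using Z(1) by auto
  ultimately have "finite (range (\<lambda>k. ((+) b ^^ k) c))"
    by (rule finite_subset)
  then show False
    using inj_iterate_add[OF \<open>0 \<sqsubset> b\<close>] finite_imageD infinite_UNIV_nat by blast
qed

end

lemma ex_exponent_order_pos:
  fixes x :: "'n::finite \<Rightarrow>\<^sub>0 int"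
  assumes "x \<noteq> 0"
  obtains less where "exponent_order less" "less 0 x"
proof -
  interpret lex: monomial_order "lex_less :: ('n \<Rightarrow>\<^sub>0 int) \<Rightarrow> _"
    by (rule monomial_order_lex_less)
  consider "lex_less 0 x" | "lex_less x 0" using lex.total assms by blast
  then show ?thesis
  proof cases
    case 1
    then show ?thesis using that[of lex_less] by (simp add: exponent_order_def lex.monomial_order_axioms)
  next
    case 2
    then show ?thesis using that[of "\<lambda>a b. lex_less b a"] by (simp add: exponent_order_def lex.monomial_order_converse)
  qed
qed

lemma ad_locally_finite_der_coeff_const:
  fixes D :: "('n::finite, 'k::field_char_0) laurent \<Rightarrow> ('n, 'k) laurent"
  assumes D: "D \<in> Witt" "ad_locally_finite D" and x: "x \<in> keys (der_coeff D j)"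
  shows "x = 0"
proof (rule ccontr)
  assume "x \<noteq> 0"
  then obtain less where "exponent_order less" "less 0 x" by (rule ex_exponent_order_pos)
  then interpret exponent_order less by simp
  define S where "S = (\<Union>i. keys (der_coeff D i))"
  have "finite S" "x \<in> S" using x by (auto simp: S_def)
  then obtain m where m: "m \<in> S" "\<forall>y\<in>S. less y m \<or> y = m"
    using finite_has_greatest by blast
  then obtain j0 where "lookup (der_coeff D j0) m \<noteq> 0" by (auto simp: S_def in_keys_iff)
  moreover have "supp_below m (der_coeff D i)" for i
    using m by (auto simp: supp_below_def S_def)
  moreover have "less 0 m" using \<open>less 0 x\<close> m \<open>x \<in> S\<close> trans by blast
  ultimately show False using ad_locally_finite_leading_exponent_not_pos[OF D] by blast
qed

subsection \<open>Euler operators and derivations with constant coefficients\<close>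

definition const_der :: "('n::finite \<Rightarrow> 'k::field) \<Rightarrow> ('n, 'k) laurent \<Rightarrow> ('n, 'k) laurent" where
  "const_der d = der_of_coeffs (\<lambda>j. lconst (d j))"

lemma Witt_const_der: "const_der d \<in> Witt"
  by (simp add: const_der_def Witt_der_of_coeffs)

lemma der_coeff_const_der: "der_coeff (const_der d) j = lconst (d j)"
  by (simp add: const_der_def der_coeff_der_of_coeffs)

lemma const_der_lmonom: "const_der d (lmonom a) = lconst (exp_pairing d a) * lmonom a"
  by (simp add: const_der_def der_of_coeffs_lmonom exp_pairing_def lconst_sum lconst_mult mult.commute
      flip: lconst_of_int)

lemma const_der_der_coeff:
  fixes D :: "('n::finite, 'k::field) laurent \<Rightarrow> ('n, 'k) laurent"
  assumes "D \<in> Witt" and "\<And>j x. x \<in> keys (der_coeff D j) \<Longrightarrow> x = 0"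
  shows "D = const_der (\<lambda>j. lookup (der_coeff D j) 0)"
proof (rule Witt_eqI[OF assms(1) Witt_const_der])
  fix j
  show "der_coeff D j = der_coeff (const_der (\<lambda>j. lookup (der_coeff D j) 0)) j"
  proof (rule poly_mapping_eqI)
    fix x
    show "lookup (der_coeff D j) x = lookup (der_coeff (const_der (\<lambda>j. lookup (der_coeff D j) 0)) j) x"
      using assms(2)[of x j] by (cases "x = 0") (auto simp: der_coeff_const_der lookup_lconst in_keys_iff)
  qed
qed

lemma der_coeff_lin_comb:
  "der_coeff (\<lambda>f. \<Sum>j\<in>S. lconst (d j) * X j f) l = (\<Sum>j\<in>S. lconst (d j) * der_coeff (X j) l)"
  by (simp add: der_coeff_def logder_def sum_distrib_left mult.left_commute)

lemma lie_bracket_Hder_const_der: "lie_bracket (Hder i) (const_der d) = der_zero"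
  by (rule Witt_eqI)
    (simp_all add: Witt_lie_bracket Witt_Hder Witt_const_der Witt_der_zero der_coeff_der_zero
      der_coeff_bracket_Hder(1) der_coeff_const_der Hder_lconst)

lemma commutes_with_Hder_imp_const:
  fixes Y :: "('n::finite, 'k::field_char_0) laurent \<Rightarrow> ('n, 'k) laurent"
  assumes Y: "Y \<in> Witt" and comm: "\<And>i. lie_bracket Y (Hder i) = der_zero"
    and x: "x \<in> keys (der_coeff Y j)"
  shows "x = 0"
proof (rule poly_mapping_eqI)
  fix i
  have "Hder i (der_coeff Y j) = 0"
    using der_coeff_bracket_Hder(2)[OF Y, of i j] comm[of i] by (simp add: der_coeff_der_zero)
  then have "of_int (lookup x i) * lookup (der_coeff Y j) x = (0 :: 'k)"
    by (metis lookup_Hder lookup_zero)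
  then show "lookup x i = lookup 0 i" using x by (simp add: in_keys_iff)
qed

lemma der_coeff_iterate_bracket_Hder:
  assumes "Y \<in> Witt"
  shows "(lie_bracket (Hder i) ^^ k) Y \<in> Witt \<and>
    (\<forall>j. der_coeff ((lie_bracket (Hder i) ^^ k) Y) j = (Hder i ^^ k) (der_coeff Y j))"
  by (induction k) (simp_all add: assms der_coeff_bracket_Hder Witt_lie_bracket Witt_Hder)

text \<open>\<open>ad H\<^sub>i\<close> acts on \<open>x\<^sup>a \<Sum>\<^sub>j c\<^sub>j H\<^sub>j\<close> as multiplication by \<open>a\<^sub>i\<close>, so the orbit of \<open>Y\<close> stays in the span of
  its finitely many monomial components.\<close>
lemma ad_locally_finite_Hder: "ad_locally_finite (Hder i :: ('n::finite, 'k::field) laurent \<Rightarrow> _)"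
  unfolding ad_locally_finite_def
proof
  fix Y :: "('n, 'k) laurent \<Rightarrow> _"
  assume Y: "Y \<in> Witt"
  define A where "A = (\<Union>j. keys (der_coeff Y j))"
  define P where "P a = der_of_coeffs (\<lambda>j. lconst (lookup (der_coeff Y j) a) * lmonom a)" for a
  have "finite A" by (simp add: A_def)
  have ZW: "P ` A \<subseteq> Witt" by (auto simp: P_def Witt_der_of_coeffs)
  have "(lie_bracket (Hder i) ^^ k) Y \<in> der_span (P ` A)" for k
  proof -
    define c where "c a = (of_int (lookup a i) ^ k :: 'k)" for a :: "'n \<Rightarrow>\<^sub>0 int"
    obtain W where W: "W \<in> der_span (P ` A)" "\<And>j. der_coeff W j = (\<Sum>a\<in>A. lconst (c a) * der_coeff (P a) j)"
      using der_span_lin_comb[OF \<open>finite A\<close>, of P "P ` A" c] der_span.base by blast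
    have "der_coeff W j = der_coeff ((lie_bracket (Hder i) ^^ k) Y) j" for j
    proof (rule poly_mapping_eqI)
      fix x
      have "lookup (der_coeff W j) x = (\<Sum>a\<in>A. if x = a then c x * lookup (der_coeff Y j) x else 0)"
        unfolding W(2) lookup_sum by (rule sum.cong)
          (simp_all add: P_def der_coeff_der_of_coeffs lookup_lconst_mult lookup_lmonom)
      also have "\<dots> = lookup (der_coeff ((lie_bracket (Hder i) ^^ k) Y) j) x"
        using der_coeff_iterate_bracket_Hder[OF Y, where i = i and k = k] \<open>finite A\<close>
        by (auto simp: lookup_Hder_power A_def in_keys_iff c_def)
      finally show "lookup (der_coeff W j) x = lookup (der_coeff ((lie_bracket (Hder i) ^^ k) Y) j) x" .
    qed
    then have "W = (lie_bracket (Hder i) ^^ k) Y"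
      using Witt_eqI[OF Witt_der_span[OF W(1) ZW]] der_coeff_iterate_bracket_Hder[OF Y] by blast
    with W(1) show ?thesis by simp
  qed
  with \<open>finite A\<close> ZW show "\<exists>Z. finite Z \<and> Z \<subseteq> Witt \<and> (\<forall>k. (lie_bracket (Hder i) ^^ k) Y \<in> der_span Z)"
    by blast
qed

definition int_eigenvalues :: "(('n, 'k::field) laurent \<Rightarrow> ('n, 'k) laurent) \<Rightarrow> bool" where
  "int_eigenvalues D \<longleftrightarrow>
     (\<forall>Y\<in>Witt. \<forall>c. Y \<noteq> der_zero \<longrightarrow> lie_bracket D Y = der_scale c Y \<longrightarrow> c \<in> \<int>)"

lemma int_eigenvalues_Hder: "int_eigenvalues (Hder i :: ('n::finite, 'k::field) laurent \<Rightarrow> _)"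
  unfolding int_eigenvalues_def
proof (intro ballI allI impI)
  fix Y :: "('n, 'k) laurent \<Rightarrow> _" and c
  assume Y: "Y \<in> Witt" "Y \<noteq> der_zero" and eigen: "lie_bracket (Hder i) Y = der_scale c Y"
  have "\<exists>j. der_coeff Y j \<noteq> 0"
  proof (rule ccontr)
    assume "\<not> ?thesis"
    then have "Y = der_zero"
      by (intro Witt_eqI[OF Y(1) Witt_der_zero]) (simp add: der_coeff_der_zero)
    with Y(2) show False ..
  qed
  then obtain j x where x: "lookup (der_coeff Y j) x \<noteq> 0"
    by (metis poly_mapping_eqI lookup_zero)
  have "Hder i (der_coeff Y j) = lconst c * der_coeff Y j"
    using arg_cong[OF eigen, of "\<lambda>X. der_coeff X j"]
    by (simp add: der_coeff_bracket_Hder(1)[OF Y(1)] der_coeff_der_scale)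
  then have "of_int (lookup x i) * lookup (der_coeff Y j) x = c * lookup (der_coeff Y j) x"
    by (metis lookup_Hder lookup_lconst_mult)
  then show "c \<in> \<int>" using x by (metis Ints_of_int mult_cancel_right)
qed

text \<open>The eigenvalue of \<open>\<Sum>\<^sub>l d\<^sub>l H\<^sub>l\<close> on \<open>x\<^sub>j H\<^sub>j\<close> is \<open>d\<^sub>j\<close>.\<close>
lemma int_eigenvalues_const_der:
  fixes d :: "'n::finite \<Rightarrow> 'k::field"
  assumes "int_eigenvalues (const_der d)"
  shows "d j \<in> \<int>"
proof -
  define Y where "Y = der_of_coeffs (\<lambda>k. if k = j then lmonom (unit_exp j) else (0 :: ('n, 'k) laurent))"
  have YW: "Y \<in> Witt" by (simp add: Y_def Witt_der_of_coeffs)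
  have dY: "der_coeff Y k = (if k = j then lmonom (unit_exp j) else 0)" for k
    by (simp add: Y_def der_coeff_der_of_coeffs)
  have "Y \<noteq> der_zero"
  proof
    assume "Y = der_zero"
    then have "lookup (der_coeff Y j) (unit_exp j) = 0" by (simp add: der_coeff_der_zero)
    then show False by (simp add: dY lookup_lmonom)
  qed
  moreover have "lie_bracket (const_der d) Y = der_scale (d j) Y"
  proof (rule Witt_eqI[OF Witt_lie_bracket[OF Witt_const_der YW] Witt_der_scale[OF YW]])
    fix k
    have "const_der d 0 = 0"
      by (simp add: const_der_def der_of_coeffs_def laurent_linear_zero[OF laurent_linear_Hder])
    then have "const_der d (der_coeff Y k) = lconst (d j) * der_coeff Y k"
      by (simp add: dY const_der_lmonom exp_pairing_unit_exp)
    moreover have "Y (lconst (d k)) = 0"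
      by (simp add: Y_def der_of_coeffs_lconst)
    ultimately show "der_coeff (lie_bracket (const_der d) Y) k = der_coeff (der_scale (d j) Y) k"
      by (simp add: der_coeff_lie_bracket[OF Witt_const_der YW] der_coeff_const_der der_coeff_der_scale)
  qed
  ultimately show ?thesis using assms YW unfolding int_eigenvalues_def by blast
qed

lemma const_der_of_int_eigenvalues:
  fixes D :: "('n::finite, 'k::field) laurent \<Rightarrow> ('n, 'k) laurent"
  assumes "D \<in> Witt" "int_eigenvalues D" "\<And>j x. x \<in> keys (der_coeff D j) \<Longrightarrow> x = 0"
  obtains m :: "'n \<Rightarrow> int" where "D = const_der (\<lambda>j. of_int (m j))"
proof -
  have const: "D = const_der (\<lambda>j. lookup (der_coeff D j) 0)"
    using assms(1,3) by (rule const_der_der_coeff)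
  from assms(2) have "int_eigenvalues (const_der (\<lambda>j. lookup (der_coeff D j) 0))"
    by (subst (asm) const)
  then have "lookup (der_coeff D j) 0 \<in> \<int>" for j
    by (rule int_eigenvalues_const_der)
  then have "\<forall>j. \<exists>z. lookup (der_coeff D j) 0 = of_int z"
    unfolding Ints_def by blast
  then obtain m where m: "\<forall>j. lookup (der_coeff D j) 0 = of_int (m j)"
    using choice[of "\<lambda>j z. lookup (der_coeff D j) 0 = of_int z"] by blast
  show ?thesis
    using const unfolding m[rule_format] by (rule that)
qed

subsection \<open>Transport along a Lie automorphism\<close>

locale witt_automorphism =
  fixes \<sigma> :: "(('n::finite, 'k::field_char_0) laurent \<Rightarrow> ('n, 'k) laurent) \<Rightarrow> (('n, 'k) laurent \<Rightarrow> ('n, 'k) laurent)"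
  assumes aut: "witt_lie_aut \<sigma>"
begin

lemma bij: "bij_betw \<sigma> Witt Witt"
  using aut by (simp add: witt_lie_aut_def)

lemma Witt_sigma: "X \<in> Witt \<Longrightarrow> \<sigma> X \<in> Witt"
  using bij by (rule bij_betw_apply)

lemma sigma_inj: "X \<in> Witt \<Longrightarrow> Y \<in> Witt \<Longrightarrow> \<sigma> X = \<sigma> Y \<Longrightarrow> X = Y"
  using bij_betw_imp_inj_on[OF bij] by (rule inj_onD)

lemma sigma_surj:
  assumes "Y \<in> Witt"
  obtains X where "X \<in> Witt" "\<sigma> X = Y"
  using assms bij_betw_imp_surj_on[OF bij] by (metis imageE)

lemma sigma_der_add: "X \<in> Witt \<Longrightarrow> Y \<in> Witt \<Longrightarrow> \<sigma> (der_add X Y) = der_add (\<sigma> X) (\<sigma> Y)"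
  using aut by (simp add: witt_lie_aut_def)

lemma sigma_der_scale: "X \<in> Witt \<Longrightarrow> \<sigma> (der_scale c X) = der_scale c (\<sigma> X)"
  using aut by (simp add: witt_lie_aut_def)

lemma sigma_lie_bracket: "X \<in> Witt \<Longrightarrow> Y \<in> Witt \<Longrightarrow> \<sigma> (lie_bracket X Y) = lie_bracket (\<sigma> X) (\<sigma> Y)"
  using aut by (simp add: witt_lie_aut_def)

lemma sigma_der_zero: "\<sigma> der_zero = der_zero"
proof -
  have zero: "der_scale 0 X = der_zero" for X :: "('n, 'k) laurent \<Rightarrow> _"
    by (simp add: der_scale_def der_zero_def)
  have "\<sigma> der_zero = der_scale 0 (\<sigma> der_zero)"
    using sigma_der_scale[OF Witt_der_zero, of 0] by (simp add: zero)
  then show ?thesis by (simp add: zero)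
qed

lemma sigma_iterate_bracket:
  assumes "X \<in> Witt" "Y \<in> Witt"
  shows "(lie_bracket X ^^ k) Y \<in> Witt \<and> \<sigma> ((lie_bracket X ^^ k) Y) = (lie_bracket (\<sigma> X) ^^ k) (\<sigma> Y)"
  by (induction k) (simp_all add: assms Witt_lie_bracket sigma_lie_bracket)

lemma sigma_der_span: "X \<in> der_span Z \<Longrightarrow> Z \<subseteq> Witt \<Longrightarrow> \<sigma> X \<in> der_span (\<sigma> ` Z)"
proof (induction X rule: der_span.induct)
  case zero
  then show ?case by (simp add: sigma_der_zero der_span.zero)
next
  case (base X)
  then show ?case by (simp add: der_span.base)
next
  case (add X Y)
  then show ?case by (simp add: Witt_der_span sigma_der_add der_span.add)
next
  case (scale X c)
  then show ?case by (simp add: Witt_der_span sigma_der_scale der_span.scale)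
qed

lemma ad_locally_finite_sigma:
  assumes X: "X \<in> Witt" "ad_locally_finite X"
  shows "ad_locally_finite (\<sigma> X)"
  unfolding ad_locally_finite_def
proof
  fix Y :: "('n, 'k) laurent \<Rightarrow> ('n, 'k) laurent"
  assume "Y \<in> Witt"
  then obtain Y' where Y': "Y' \<in> Witt" "\<sigma> Y' = Y" by (rule sigma_surj)
  obtain Z where Z: "finite Z" "Z \<subseteq> Witt" "\<And>k. (lie_bracket X ^^ k) Y' \<in> der_span Z"
    using X(2) Y'(1) unfolding ad_locally_finite_def by blast
  have "(lie_bracket (\<sigma> X) ^^ k) Y \<in> der_span (\<sigma> ` Z)" for k
    using sigma_iterate_bracket[OF X(1) Y'(1), of k] sigma_der_span[OF Z(3)[of k] Z(2)] Y'(2) by simp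
  moreover have "\<sigma> ` Z \<subseteq> Witt" using Z(2) Witt_sigma by blast
  ultimately show "\<exists>Z. finite Z \<and> Z \<subseteq> Witt \<and> (\<forall>k. (lie_bracket (\<sigma> X) ^^ k) Y \<in> der_span Z)"
    using Z(1) by blast
qed

lemma int_eigenvalues_sigma_iff:
  assumes X: "X \<in> Witt"
  shows "int_eigenvalues (\<sigma> X) \<longleftrightarrow> int_eigenvalues X"
proof -
  have eigen: "lie_bracket (\<sigma> X) (\<sigma> Y) = der_scale c (\<sigma> Y) \<longleftrightarrow> lie_bracket X Y = der_scale c Y"
    if Y: "Y \<in> Witt" for Y c
  proof -
    have "lie_bracket (\<sigma> X) (\<sigma> Y) = der_scale c (\<sigma> Y) \<longleftrightarrow> \<sigma> (lie_bracket X Y) = \<sigma> (der_scale c Y)"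
      by (simp add: sigma_lie_bracket[OF X Y] sigma_der_scale[OF Y])
    also have "\<dots> \<longleftrightarrow> lie_bracket X Y = der_scale c Y"
      using sigma_inj[OF Witt_lie_bracket[OF X Y] Witt_der_scale[OF Y]] by auto
    finally show ?thesis .
  qed
  have nonzero: "\<sigma> Y \<noteq> der_zero \<longleftrightarrow> Y \<noteq> der_zero" if "Y \<in> Witt" for Y
    using sigma_inj[OF that Witt_der_zero] sigma_der_zero by auto
  show ?thesis
  proof
    assume H: "int_eigenvalues (\<sigma> X)"
    show "int_eigenvalues X"
      unfolding int_eigenvalues_def
    proof (intro ballI allI impI)
      fix Y c
      assume "Y \<in> Witt" "Y \<noteq> der_zero" "lie_bracket X Y = der_scale c Y"
      with H eigen nonzero Witt_sigma show "c \<in> \<int>" unfolding int_eigenvalues_def by blast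
    qed
  next
    assume H: "int_eigenvalues X"
    show "int_eigenvalues (\<sigma> X)"
      unfolding int_eigenvalues_def
    proof (intro ballI allI impI)
      fix Y c
      assume Y: "Y \<in> Witt" "Y \<noteq> der_zero" "lie_bracket (\<sigma> X) Y = der_scale c Y"
      obtain Y' where "Y' \<in> Witt" "\<sigma> Y' = Y" using Y(1) by (rule sigma_surj)
      with H Y eigen nonzero show "c \<in> \<int>" unfolding int_eigenvalues_def by blast
    qed
  qed
qed

lemma sigma_lin_comb_Hder:
  "(\<lambda>f. \<Sum>j\<in>S. lconst (d j) * Hder j f) \<in> Witt \<and>
    \<sigma> (\<lambda>f. \<Sum>j\<in>S. lconst (d j) * Hder j f) = (\<lambda>f. \<Sum>j\<in>S. lconst (d j) * \<sigma> (Hder j) f)"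
proof (induction S rule: infinite_finite_induct)
  case (infinite S)
  then show ?case using Witt_der_zero sigma_der_zero by (simp add: der_zero_def)
next
  case empty
  then show ?case using Witt_der_zero sigma_der_zero by (simp add: der_zero_def)
next
  case (insert x S)
  let ?H = "\<lambda>f. \<Sum>j\<in>S. lconst (d j) * Hder j f"
  have "(\<lambda>f. \<Sum>j\<in>insert x S. lconst (d j) * Hder j f) = der_add (der_scale (d x) (Hder x)) ?H"
    and "(\<lambda>f. \<Sum>j\<in>insert x S. lconst (d j) * \<sigma> (Hder j) f) =
      der_add (der_scale (d x) (\<sigma> (Hder x))) (\<lambda>f. \<Sum>j\<in>S. lconst (d j) * \<sigma> (Hder j) f)"
    using insert(1,2) by (simp_all add: der_add_def der_scale_def)
  with insert(3) show ?case
    by (simp add: Witt_der_add Witt_der_scale Witt_Hder sigma_der_add sigma_der_scale)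
qed

lemma sigma_const_der: "\<sigma> (const_der d) = (\<lambda>f. \<Sum>j\<in>UNIV. lconst (d j) * \<sigma> (Hder j) f)"
  using sigma_lin_comb_Hder[of d UNIV] by (simp add: const_der_def der_of_coeffs_def)

lemma sigma_Hder_const_der_int: "\<exists>m :: 'n \<Rightarrow> int. \<sigma> (Hder i) = const_der (\<lambda>j. of_int (m j))"
proof -
  have W: "\<sigma> (Hder i) \<in> Witt"
    by (simp add: Witt_sigma Witt_Hder)
  have E: "int_eigenvalues (\<sigma> (Hder i))"
    by (simp add: int_eigenvalues_sigma_iff Witt_Hder int_eigenvalues_Hder)
  have LF: "ad_locally_finite (\<sigma> (Hder i))"
    by (simp add: ad_locally_finite_sigma Witt_Hder ad_locally_finite_Hder)
  obtain m where "\<sigma> (Hder i) = const_der (\<lambda>j. of_int (m j))"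
    by (rule const_der_of_int_eigenvalues[OF W E ad_locally_finite_der_coeff_const[OF W LF]])
  then show ?thesis by blast
qed

text \<open>\<open>\<sigma>\<^sup>-\<^sup>1(H\<^sub>k)\<close> commutes with all \<open>H\<^sub>i\<close>, because each \<open>\<sigma>(H\<^sub>i)\<close> has constant coefficients.\<close>
lemma Hder_int_lin_comb_sigma_Hder:
  "\<exists>n :: 'n \<Rightarrow> int. Hder k = (\<lambda>f. \<Sum>j\<in>UNIV. lconst (of_int (n j)) * \<sigma> (Hder j) f)"
proof -
  obtain Y where Y: "Y \<in> Witt" "\<sigma> Y = Hder k" using Witt_Hder by (rule sigma_surj)
  have comm: "lie_bracket Y (Hder i) = der_zero" for i
  proof (rule sigma_inj[OF Witt_lie_bracket[OF Y(1) Witt_Hder] Witt_der_zero])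
    obtain m where "\<sigma> (Hder i) = const_der (\<lambda>j. of_int (m j))" using sigma_Hder_const_der_int by blast
    then show "\<sigma> (lie_bracket Y (Hder i)) = \<sigma> der_zero"
      by (simp add: sigma_lie_bracket[OF Y(1) Witt_Hder] Y(2) lie_bracket_Hder_const_der sigma_der_zero)
  qed
  have "int_eigenvalues (\<sigma> Y)"
    using Y(2) int_eigenvalues_Hder by simp
  then have "int_eigenvalues Y"
    using int_eigenvalues_sigma_iff[OF Y(1)] by blast
  then obtain n where "Y = const_der (\<lambda>j. of_int (n j))"
    by (rule const_der_of_int_eigenvalues[OF Y(1) _ commutes_with_Hder_imp_const[OF Y(1) comm]])
  with Y(2) have "Hder k = \<sigma> (const_der (\<lambda>j. of_int (n j)))"
    by simp
  then show ?thesis by (auto simp: sigma_const_der)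
qed

text \<open>\<open>M\<close> is the matrix \<open>A\<^sub>\<sigma>\<close>, and \<open>N\<close> is an integer left inverse of it.\<close>
lemma sigma_Hder_matrices:
  obtains M N :: "'n \<Rightarrow> 'n \<Rightarrow> int"
  where "\<And>i. \<sigma> (Hder i) = const_der (\<lambda>j. of_int (M i j))"
    and "\<And>k l. (\<Sum>j\<in>UNIV. N k j * M j l) = (if k = l then 1 else 0)"
proof -
  have "\<forall>i. \<exists>m. \<sigma> (Hder i) = const_der (\<lambda>j. of_int (m j))"
    using sigma_Hder_const_der_int by blast
  then obtain M where M: "\<forall>i. \<sigma> (Hder i) = const_der (\<lambda>j. of_int (M i j))"
    using choice[of "\<lambda>i m. \<sigma> (Hder i) = const_der (\<lambda>j. of_int (m j))"] by blast
  have "\<forall>k. \<exists>n. Hder k = (\<lambda>f. \<Sum>j\<in>UNIV. lconst (of_int (n j)) * \<sigma> (Hder j) f)"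
    using Hder_int_lin_comb_sigma_Hder by blast
  then obtain N where N: "\<forall>k. Hder k = (\<lambda>f. \<Sum>j\<in>UNIV. lconst (of_int (N k j)) * \<sigma> (Hder j) f)"
    using choice[of "\<lambda>k n. Hder k = (\<lambda>f. \<Sum>j\<in>UNIV. lconst (of_int (n j)) * \<sigma> (Hder j) f)"] by blast
  have NM: "(\<Sum>j\<in>UNIV. N k j * M j l) = (if k = l then 1 else 0)" for k l
  proof -
    have "lconst (of_int (if k = l then 1 else 0)) = der_coeff (Hder k) l"
      by (cases "k = l") (simp_all add: der_coeff_Hder)
    also have "\<dots> = (\<Sum>j\<in>UNIV. lconst (of_int (N k j)) * der_coeff (\<sigma> (Hder j)) l)"
      by (subst N[rule_format, of k]) (rule der_coeff_lin_comb)
    also have "\<dots> = lconst (\<Sum>j\<in>UNIV. of_int (N k j) * of_int (M j l))"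
      by (simp add: M der_coeff_const_der lconst_mult lconst_sum)
    finally have "(of_int (if k = l then 1 else 0) :: 'k) = of_int (\<Sum>j\<in>UNIV. N k j * M j l)"
      by (simp only: lconst_inject of_int_sum of_int_mult)
    then show ?thesis by (simp only: of_int_eq_iff)
  qed
  show ?thesis
    by (rule that[of M N]) (use M NM in simp_all)
qed

end

lemma int_matrix_left_inverse_imp_invertible:
  fixes A C :: "int ^ 'n ^ 'n"
  assumes "C ** A = mat 1"
  shows "invertible A"
proof -
  define R :: "int ^ 'n ^ 'n \<Rightarrow> real ^ 'n ^ 'n" where "R M = (\<chi> i j. of_int (M $ i $ j))" for M
  have R_mult: "R (X ** Y) = R X ** R Y" for X Y
    by (simp add: R_def matrix_matrix_mult_def vec_eq_iff of_int_sum)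
  have R_one: "R (mat 1) = mat 1"
    by (simp add: R_def mat_def vec_eq_iff)
  have "R C ** R A = mat 1" using assms by (simp flip: R_mult R_one)
  then have "R A ** R C = mat 1" by (rule matrix_left_right_inverse[THEN iffD1])
  then have "R (A ** C) = R (mat 1)" by (simp add: R_mult R_one)
  then have "A ** C = mat 1" by (simp add: R_def vec_eq_iff)
  with assms show ?thesis unfolding invertible_def by blast
qed

theorem corollary2p7:
  fixes \<sigma> :: "((('n::finite, 'k::field_char_0) laurent \<Rightarrow> ('n, 'k) laurent)
               \<Rightarrow> (('n, 'k) laurent \<Rightarrow> ('n, 'k) laurent))"
  assumes "witt_lie_aut \<sigma>"
  shows "\<exists>A :: int ^ 'n ^ 'n. invertible A \<and>
           (\<forall>i. \<sigma> (Hder i) = (\<lambda>f. \<Sum>j\<in>UNIV. lconst (of_int (A $ i $ j)) * Hder j f))"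
proof -
  interpret witt_automorphism \<sigma> by (rule witt_automorphism.intro) (fact assms)
  obtain M N :: "'n \<Rightarrow> 'n \<Rightarrow> int"
    where M: "\<And>i. \<sigma> (Hder i) = const_der (\<lambda>j. of_int (M i j))"
      and NM: "\<And>k l. (\<Sum>j\<in>UNIV. N k j * M j l) = (if k = l then 1 else 0)"
    using sigma_Hder_matrices by blast
  define A :: "int ^ 'n ^ 'n" where "A = (\<chi> i j. M i j)"
  have "(\<chi> i j. N i j) ** A = mat 1"
    by (simp add: vec_eq_iff matrix_matrix_mult_def mat_def A_def NM)
  then have "invertible A"
    by (rule int_matrix_left_inverse_imp_invertible)
  moreover have "\<sigma> (Hder i) = (\<lambda>f. \<Sum>j\<in>UNIV. lconst (of_int (A $ i $ j)) * Hder j f)" for i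
    by (simp add: M A_def const_der_def der_of_coeffs_def)
  ultimately show ?thesis by blast
qed

end
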